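(* Let $W$ be a suitable basis of $A$ at $\{\beta_1,\ldots,\beta_I\}$ and let $e\in C[x]$, $M\in C[x]^{r\times r}$ with $SW=\frac1eMW$. Let $h=\frac{cW}{\tilde u}\in A$ with $c=(c_1,\dots,c_r)\in C[x]^r$, $\tilde u\in C[x]$, $\gcd(\tilde u,c_1,\dots,c_r)=1$, and $\tilde u\prod_{i=1}^I(x-\beta_i)$ shift-free. If $h$ is summable in $A$, then $\tilde u$ divides $e$ and $h=\Delta(bW)$ for some $b\in C[x]^r$.
   Context: Let $C$ be a field of characteristic zero and $\bar C$ its algebraic closure; $\sigma(f)(x)=f(x+1)$, $C(x)[S]$ the Ore algebra with $Sf=\sigma(f)S$, $\Delta=S-1$. Fix $L=\sum_{i=0}^r\ell_iS^i\in C[x][S]$ with $\ell_0\ell_r\ne0$ and $A=C(x)[S]/C(x)[S]L$; $f\in A$ is summable if $f=\Delta g$ for some $g\in A$. For a basis $W=(\omega_1,\dots,\omega_r)$, $a\in C[x]^r$, $u\in C[x]$: $\frac{aW}{u}=\frac1u\sum a_i\omega_i$, $SW=(S\omega_i)_i$. A polynomial $p$ is shift-free if $\gcd(p,\sigma^i(p))=1$ for all nonzero $i\in\mathbb Z$. For $\alpha\in\bar C$, operators $P=\sum p_iS^i$ act on $b:\alpha+\mathbb Z\to\bar C((q))$ by $(P\cdot b)(z)=\sum p_i(z+q)b(z+i)$; $\operatorname{Sol}_\alpha(L)=\{b:L\cdot b=0\}$; $\operatorname{val}_\alpha(f)=\min_{b\in\operatorname{Sol}_\alpha(L)}(\nu_q((f\cdot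 b)(\alpha))-\liminf_n\nu_q(b(\alpha-n)))$; $f$ integral at $\alpha$ iff $\operatorname{val}_\alpha(f)\ge0$; a local integral basis at $\alpha$ is a basis of the $C(x)_\alpha$-module of integral elements ($C(x)_\alpha=\{p/q:q(\alpha)\ne0\}$), and at a set if at each point. On $\alpha+\mathbb Z$, $\beta<\gamma$ means $\beta-\gamma$ is a negative integer. Suitable bases: let $\alpha_1+\mathbb Z,\dots,\alpha_I+\mathbb Z$ be the distinct orbits containing a root of $\ell_0\ell_r$; in orbit $i$ let $\alpha_{i,1}<\dots<\alpha_{i,J_i}$ be these roots, and choose $\beta_i\in\alpha_i+\mathbb Z$ with $\alpha_{i,J_i}\le\beta_i$, such that if $\alpha_{i,J_i},\alpha_{i',J_{i'}}$ are $C$-conjugate then $\beta_i-\alpha_{i,J_i}=\beta_{i'}-\alpha_{i',J_{i'}}$. Let $Z=\bigcup_i\{\gamma\in\alpha_i+\mathbb Z\mid\alpha_{i,1}<\gamma\le\beta_i\}$. A $C(x)$-basis $W$ of $A$ is suitable at $\{\beta_1,\dots,\beta_I\}$ if it is a local integral basis at $Z$ and generates the same $C(x)_\alpha$-module as $\{1,S,\dots,S^{r-1}\}$ for every $\alpha\in\bar C\setminus Z$. *)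

theory Defs
  imports "HOL-Algebra.Algebraic_Closure_Type"
          "HOL-Computational_Algebra.Normalized_Fraction"
          "HOL-Computational_Algebra.Formal_Laurent_Series"
          "HOL-Library.Extended_Real"
begin

text \<open>
  C is a type 'a of class field_char_0 (plus the standard field_gcd
  structure so that gcds of polynomials are available); the algebraic closure of C is
  the type 'a alg_closure with embedding to_ac.  C(x) is the fraction field
  'a poly fract.  The operator L = sum_{i=0..r} ell i S^i is given by its coefficient
  function ell and its order r.  The module A = C(x)[S]/C(x)[S]L is represented by
  coordinate vectors v :: nat => C(x) w.r.t. the standard basis 1,S,...,S^(r-1)
  (v i = 0 for i >= r); every class has a unique representative of S-degree < r.
\<close>

type_synonym 'a ratfun = "'a poly fract"

definition pshift :: "'a::comm_ring_1 poly \<Rightarrow> 'a poly" where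
  "pshift p = pcompose p [:1, 1:]"

definition pshift_int :: "int \<Rightarrow> 'a::comm_ring_1 poly \<Rightarrow> 'a poly" where
  "pshift_int i p = pcompose p [:of_int i, 1:]"

definition rshift :: "'a::field_gcd ratfun \<Rightarrow> 'a ratfun" where
  "rshift f = (case quot_of_fract f of (p, q) \<Rightarrow> Fract (pshift p) (pshift q))"

definition Avec :: "nat \<Rightarrow> (nat \<Rightarrow> 'a::field_gcd ratfun) set" where
  "Avec r = {v. \<forall>i\<ge>r. v i = 0}"

definition lincomb :: "nat \<Rightarrow> (nat \<Rightarrow> 'a::field_gcd ratfun) \<Rightarrow> (nat \<Rightarrow> nat \<Rightarrow> 'a ratfun)
    \<Rightarrow> (nat \<Rightarrow> 'a ratfun)" where
  "lincomb r a W = (\<lambda>j. \<Sum>i<r. a i * W i j)"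

text \<open>S applied to the class of sum_{i<r} v_i S^i, reduced modulo L.\<close>
definition shiftA :: "(nat \<Rightarrow> 'a::field_gcd poly) \<Rightarrow> nat \<Rightarrow> (nat \<Rightarrow> 'a ratfun) \<Rightarrow> (nat \<Rightarrow> 'a ratfun)" where
  "shiftA ell r v = (\<lambda>j. if j < r then
       (if j = 0 then 0 else rshift (v (j - 1))) - rshift (v (r - 1)) * Fract (ell j) (ell r)
     else 0)"

definition deltaA :: "(nat \<Rightarrow> 'a::field_gcd poly) \<Rightarrow> nat \<Rightarrow> (nat \<Rightarrow> 'a ratfun) \<Rightarrow> (nat \<Rightarrow> 'a ratfun)" where
  "deltaA ell r v = (\<lambda>j. shiftA ell r v j - v j)"

definition summable_A :: "(nat \<Rightarrow> 'a::field_gcd poly) \<Rightarrow> nat \<Rightarrow> (nat \<Rightarrow> 'a ratfun) \<Rightarrow> bool" where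
  "summable_A ell r f \<longleftrightarrow> (\<exists>g\<in>Avec r. f = deltaA ell r g)"

definition is_basis_A :: "nat \<Rightarrow> (nat \<Rightarrow> nat \<Rightarrow> 'a::field_gcd ratfun) \<Rightarrow> bool" where
  "is_basis_A r W \<longleftrightarrow> (\<forall>i<r. W i \<in> Avec r)
     \<and> (\<forall>a. lincomb r a W = (\<lambda>_. 0) \<longrightarrow> (\<forall>i<r. a i = 0))
     \<and> (\<forall>f\<in>Avec r. \<exists>a. f = lincomb r a W)"

definition peval_fls :: "'a::field poly \<Rightarrow> 'a alg_closure \<Rightarrow> 'a alg_closure fls" where
  "peval_fls p z = poly (map_poly (\<lambda>c. fls_const (to_ac c)) p) (fls_const z + fls_X)"

definition reval_fls :: "'a::field_gcd ratfun \<Rightarrow> 'a alg_closure \<Rightarrow> 'a alg_closure fls" where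
  "reval_fls f z = (case quot_of_fract f of (p, q) \<Rightarrow> peval_fls p z / peval_fls q z)"

definition nu_q :: "'b::zero fls \<Rightarrow> ereal" where
  "nu_q s = (if s = 0 then \<infinity> else ereal (of_int (fls_subdegree s)))"

text \<open>A function b : alpha + Z -> closure((q)) is encoded as b' :: int => _, b' n = b(alpha+n).
  Sol_alpha(L) = {b. L . b = 0}.\<close>
definition Sol :: "(nat \<Rightarrow> 'a::field poly) \<Rightarrow> nat \<Rightarrow> 'a alg_closure \<Rightarrow> (int \<Rightarrow> 'a alg_closure fls) set" where
  "Sol ell r \<alpha> = {b. \<forall>n::int. (\<Sum>i\<le>r. peval_fls (ell i) (\<alpha> + of_int n) * b (n + int i)) = 0}"

text \<open>(f . b)(alpha) for f = sum_{i<r} f_i S^i.\<close>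
definition act_at :: "nat \<Rightarrow> (nat \<Rightarrow> 'a::field_gcd ratfun) \<Rightarrow> 'a alg_closure
    \<Rightarrow> (int \<Rightarrow> 'a alg_closure fls) \<Rightarrow> 'a alg_closure fls" where
  "act_at r f \<alpha> b = (\<Sum>i<r. reval_fls (f i) \<alpha> * b (int i))"

text \<open>f integral at alpha iff val_alpha(f) >= 0, i.e. for every b in Sol_alpha(L):
  nu_q((f.b)(alpha)) - liminf_n nu_q(b(alpha - n)) >= 0.\<close>
definition integral_at :: "(nat \<Rightarrow> 'a::field_gcd poly) \<Rightarrow> nat \<Rightarrow> 'a alg_closure
    \<Rightarrow> (nat \<Rightarrow> 'a ratfun) \<Rightarrow> bool" where
  "integral_at ell r \<alpha> f \<longleftrightarrow> (\<forall>b\<in>Sol ell r \<alpha>.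
      liminf (\<lambda>n::nat. nu_q (b (- int n))) \<le> nu_q (act_at r f \<alpha> b))"

definition loc_ring :: "'a alg_closure \<Rightarrow> 'a::field_gcd ratfun set" where
  "loc_ring \<alpha> = {f. \<exists>p q. f = Fract p q \<and> poly (map_poly to_ac q) \<alpha> \<noteq> 0}"

definition local_integral_basis :: "(nat \<Rightarrow> 'a::field_gcd poly) \<Rightarrow> nat \<Rightarrow> 'a alg_closure
    \<Rightarrow> (nat \<Rightarrow> nat \<Rightarrow> 'a ratfun) \<Rightarrow> bool" where
  "local_integral_basis ell r \<alpha> W \<longleftrightarrow>
     (\<forall>i<r. W i \<in> Avec r \<and> integral_at ell r \<alpha> (W i))
     \<and> (\<forall>a. (\<forall>i<r. a i \<in> loc_ring \<alpha>) \<longrightarrow> lincomb r a W = (\<lambda>_. 0) \<longrightarrow> (\<forall>i<r. a i = 0))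
     \<and> (\<forall>f\<in>Avec r. integral_at ell r \<alpha> f \<longrightarrow>
           (\<exists>a. (\<forall>i<r. a i \<in> loc_ring \<alpha>) \<and> f = lincomb r a W))"

definition same_local_module :: "nat \<Rightarrow> 'a alg_closure \<Rightarrow> (nat \<Rightarrow> nat \<Rightarrow> 'a::field_gcd ratfun) \<Rightarrow> bool" where
  "same_local_module r \<alpha> W \<longleftrightarrow>
     {lincomb r a W | a. \<forall>i<r. a i \<in> loc_ring \<alpha>} = {f \<in> Avec r. \<forall>i<r. f i \<in> loc_ring \<alpha>}"

definition same_orbit :: "'b::ring_1 \<Rightarrow> 'b \<Rightarrow> bool" where
  "same_orbit a b \<longleftrightarrow> (\<exists>n::int. b = a + of_int n)"

definition orb_le :: "'b::ring_1 \<Rightarrow> 'b \<Rightarrow> bool" where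
  "orb_le a b \<longleftrightarrow> (\<exists>n::nat. b = a + of_nat n)"

definition orb_lt :: "'b::ring_1 \<Rightarrow> 'b \<Rightarrow> bool" where
  "orb_lt a b \<longleftrightarrow> (\<exists>n::nat. n > 0 \<and> b = a + of_nat n)"

definition roots_l0lr :: "(nat \<Rightarrow> 'a::field poly) \<Rightarrow> nat \<Rightarrow> 'a alg_closure set" where
  "roots_l0lr ell r = {\<alpha>. poly (map_poly to_ac (ell 0 * ell r)) \<alpha> = 0}"

definition C_conjugate :: "'a::field alg_closure \<Rightarrow> 'a alg_closure \<Rightarrow> bool" where
  "C_conjugate a b \<longleftrightarrow> (\<forall>p::'a poly. poly (map_poly to_ac p) a = 0 \<longleftrightarrow> poly (map_poly to_ac p) b = 0)"

definition is_max_root :: "(nat \<Rightarrow> 'a::field poly) \<Rightarrow> nat \<Rightarrow> 'a alg_closure \<Rightarrow> 'a alg_closure \<Rightarrow> bool" where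
  "is_max_root ell r \<beta> m \<longleftrightarrow> m \<in> roots_l0lr ell r \<and> same_orbit m \<beta>
     \<and> (\<forall>\<rho>\<in>roots_l0lr ell r. same_orbit \<rho> \<beta> \<longrightarrow> orb_le \<rho> m)"

definition admissible_betas :: "(nat \<Rightarrow> 'a::field poly) \<Rightarrow> nat \<Rightarrow> 'a alg_closure set \<Rightarrow> bool" where
  "admissible_betas ell r B \<longleftrightarrow>
     (\<forall>\<rho>\<in>roots_l0lr ell r. \<exists>!\<beta>. \<beta> \<in> B \<and> same_orbit \<rho> \<beta>)
     \<and> (\<forall>\<beta>\<in>B. \<exists>\<rho>\<in>roots_l0lr ell r. same_orbit \<rho> \<beta>)
     \<and> (\<forall>\<beta>\<in>B. \<forall>\<rho>\<in>roots_l0lr ell r. same_orbit \<rho> \<beta> \<longrightarrow> orb_le \<rho> \<beta>)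
     \<and> (\<forall>\<beta>\<in>B. \<forall>\<beta>'\<in>B. \<forall>m m'. is_max_root ell r \<beta> m \<and> is_max_root ell r \<beta>' m'
           \<and> C_conjugate m m' \<longrightarrow> \<beta> - m = \<beta>' - m')"

definition Zset :: "(nat \<Rightarrow> 'a::field poly) \<Rightarrow> nat \<Rightarrow> 'a alg_closure set \<Rightarrow> 'a alg_closure set" where
  "Zset ell r B = {\<gamma>. \<exists>\<beta>\<in>B. orb_le \<gamma> \<beta> \<and> (\<exists>\<rho>\<in>roots_l0lr ell r. orb_lt \<rho> \<gamma>)}"

definition suitable_basis :: "(nat \<Rightarrow> 'a::field_gcd poly) \<Rightarrow> nat \<Rightarrow> 'a alg_closure set
    \<Rightarrow> (nat \<Rightarrow> nat \<Rightarrow> 'a ratfun) \<Rightarrow> bool" where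
  "suitable_basis ell r B W \<longleftrightarrow> admissible_betas ell r B \<and> is_basis_A r W
     \<and> (\<forall>\<alpha>\<in>Zset ell r B. local_integral_basis ell r \<alpha> W)
     \<and> (\<forall>\<alpha>. \<alpha> \<notin> Zset ell r B \<longrightarrow> same_local_module r \<alpha> W)"

definition shift_free :: "'a::field alg_closure poly \<Rightarrow> bool" where
  "shift_free p \<longleftrightarrow> (\<forall>i::int. i \<noteq> 0 \<longrightarrow> gcd p (pshift_int i p) = 1)"

end

theory Submission
  imports Defs
begin

text \<open>Write h = Delta g with g = a W. Each a_i lies in C(x)_z for every z in the algebraic
  closure, hence is a polynomial. Otherwise take, on some orbit, the first and the last point
  where g is not in the C(x)_z-span of W. Since S g = h + g, with h local wherever u does not
  vanish, and S transports locality between z + 1 and z (elementarily where ell_0 ell_r does not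
  vanish, through integrality of solutions of L inside Z), the left end is a root of u unless
  it lies in B, and the right end is one unless it lies at or below a point of B. Either way
  u prod (x - beta) gets two roots in one orbit, contradicting shift-freeness. Comparing
  W-coordinates in h = Delta (b W) then gives c_k / u = N_k / e with polynomials N_k, so u
  divides e c_k for all k, hence e.\<close>

abbreviation poly_ac :: "'a::field poly \<Rightarrow> 'a alg_closure \<Rightarrow> 'a alg_closure" where
  "poly_ac p z \<equiv> poly (map_poly to_ac p) z"

lemma map_poly_to_ac_add:
  "map_poly to_ac (p + q) = map_poly to_ac p + map_poly (to_ac :: 'a::field \<Rightarrow> _) q"
  by (rule poly_eqI) (simp add: coeff_map_poly)

lemma map_poly_to_ac_diff:
  "map_poly to_ac (p - q) = map_poly to_ac p - map_poly (to_ac :: 'a::field \<Rightarrow> _) q"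
  by (rule poly_eqI) (simp add: coeff_map_poly)

lemma map_poly_to_ac_mult:
  "map_poly to_ac (p * q) = map_poly to_ac p * map_poly (to_ac :: 'a::field \<Rightarrow> _) q"
  by (induction p) (simp_all add: map_poly_pCons map_poly_to_ac_add map_poly_smult algebra_simps)

lemma map_poly_to_ac_pcompose:
  "map_poly to_ac (pcompose p q) = pcompose (map_poly to_ac p) (map_poly (to_ac :: 'a::field \<Rightarrow> _) q)"
  by (induction p) (simp_all add: map_poly_pCons pcompose_pCons map_poly_to_ac_add map_poly_to_ac_mult)

lemma poly_ac_add [simp]: "poly_ac (p + q) z = poly_ac p z + poly_ac q z"
  by (simp add: map_poly_to_ac_add)

lemma poly_ac_mult [simp]: "poly_ac (p * q) z = poly_ac p z * poly_ac q z"
  by (simp add: map_poly_to_ac_mult)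

lemma poly_ac_pshift_int: "poly_ac (pshift_int k p) z = poly_ac p (z + of_int k)"
  by (simp add: pshift_int_def map_poly_to_ac_pcompose poly_pcompose map_poly_pCons add.commute)

lemma poly_ac_pshift: "poly_ac (pshift p) z = poly_ac p (z + 1)"
  by (simp add: pshift_def map_poly_to_ac_pcompose poly_pcompose map_poly_pCons add.commute)

lemma coprime_imp_no_common_root_ac:
  fixes p q :: "'a::field_gcd poly"
  assumes "coprime p q" "poly_ac p z = 0" "poly_ac q z = 0"
  shows False
proof -
  obtain s t where "s * p + t * q = 1"
    using assms(1) by (metis bezout_coefficients_fst_snd coprime_iff_gcd_eq_1)
  then have "poly_ac (s * p + t * q) z = 1" by simp
  then show False using assms by simp
qed

lemma loc_ring_iff_denominator: "f \<in> loc_ring z \<longleftrightarrow> poly_ac (snd (quot_of_fract f)) z \<noteq> 0"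
proof
  assume "f \<in> loc_ring z"
  then obtain p q where f: "f = Fract p q" and q: "poly_ac q z \<noteq> 0" by (auto simp: loc_ring_def)
  obtain p' q' where pq: "quot_of_fract f = (p', q')" by (cases "quot_of_fract f")
  have "q \<noteq> 0" "q' \<noteq> 0" using q snd_quot_of_fract_nonzero[of f] pq by auto
  moreover have "Fract p' q' = f" using Fract_quot_of_fract[of f] pq by simp
  ultimately have "p' * q = p * q'" using f by (simp add: eq_fract)
  then have cross: "poly_ac p' z * poly_ac q z = poly_ac p z * poly_ac q' z" by (metis poly_ac_mult)
  have "coprime p' q'" using coprime_quot_of_fract[of f] pq by simp
  then show "poly_ac (snd (quot_of_fract f)) z \<noteq> 0"
    using coprime_imp_no_common_root_ac[of p' q' z] cross q pq by auto
next
  assume "poly_ac (snd (quot_of_fract f)) z \<noteq> 0"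
  then show "f \<in> loc_ring z" unfolding loc_ring_def
    by (intro CollectI exI[of _ "fst (quot_of_fract f)"] exI[of _ "snd (quot_of_fract f)"]) simp
qed

lemma Fract_in_loc_ring: "poly_ac q z \<noteq> 0 \<Longrightarrow> Fract p q \<in> loc_ring z"
  by (auto simp: loc_ring_def)

lemma loc_ringE:
  assumes "f \<in> loc_ring z"
  obtains p q where "f = Fract p q" "poly_ac q z \<noteq> 0" "q \<noteq> 0"
  using assms by (auto simp: loc_ring_def) (metis map_poly_0 poly_0)

lemma loc_ring_add: "f \<in> loc_ring z \<Longrightarrow> g \<in> loc_ring z \<Longrightarrow> f + g \<in> loc_ring z"
  by (elim loc_ringE) (auto intro!: Fract_in_loc_ring)

lemma loc_ring_mult: "f \<in> loc_ring z \<Longrightarrow> g \<in> loc_ring z \<Longrightarrow> f * g \<in> loc_ring z"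
  by (elim loc_ringE) (auto intro!: Fract_in_loc_ring)

lemma loc_ring_uminus: "f \<in> loc_ring z \<Longrightarrow> - f \<in> loc_ring z"
  by (elim loc_ringE) (auto intro!: Fract_in_loc_ring)

lemma loc_ring_diff: "f \<in> loc_ring z \<Longrightarrow> g \<in> loc_ring z \<Longrightarrow> f - g \<in> loc_ring z"
  using loc_ring_add[of f z "- g"] loc_ring_uminus by auto

lemma loc_ring_mult_Fract: "f \<in> loc_ring z \<Longrightarrow> poly_ac q z \<noteq> 0 \<Longrightarrow> f * Fract p q \<in> loc_ring z"
  by (intro loc_ring_mult Fract_in_loc_ring)

lemma in_all_loc_rings_imp_polynomial:
  fixes f :: "'a::field_gcd poly fract"
  assumes "\<And>z. f \<in> loc_ring z"
  shows "\<exists>p. f = Fract p 1"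
proof -
  obtain p q where pq: "quot_of_fract f = (p, q)" by (cases "quot_of_fract f")
  have "degree (map_poly to_ac q) = 0"
  proof (rule ccontr)
    assume "degree (map_poly to_ac q) \<noteq> 0"
    then obtain z where "poly_ac q z = 0" using alg_closed_imp_poly_has_root by blast
    then show False using assms[of z] pq by (simp add: loc_ring_iff_denominator)
  qed
  then obtain k where "q = [:k:]" by (metis degree_eq_zeroE degree_map_poly to_ac_eq_0_iff)
  moreover have "q \<noteq> 0" using snd_quot_of_fract_nonzero[of f] pq by simp
  moreover have "f = Fract p q" using Fract_quot_of_fract[of f] pq by simp
  ultimately have "f = Fract (smult (inverse k) p) 1" by (simp add: eq_fract)
  then show ?thesis by blast
qed

lemma pshift_mult: "pshift (p * q) = pshift p * pshift q"
  by (simp add: pshift_def pcompose_mult)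

lemma pshift_add: "pshift (p + q) = pshift p + pshift q"
  by (simp add: pshift_def pcompose_add)

lemma pshift_diff: "pshift (p - q) = pshift p - pshift (q :: 'a::comm_ring_1 poly)"
  by (simp add: pshift_def pcompose_diff)

lemma pshift_0 [simp]: "pshift 0 = 0"
  by (simp add: pshift_def)

lemma pshift_1 [simp]: "pshift 1 = (1 :: 'a::comm_ring_1 poly)"
  by (simp add: pshift_def one_pCons pcompose_pCons)

lemma pshift_eq_0_iff [simp]: "pshift p = 0 \<longleftrightarrow> (p :: 'a::idom poly) = 0"
  using pcompose_eq_0[of p "[:1, 1:]"] by (auto simp: pshift_def)

lemma pshift_pshift_int_minus_1: "pshift (pshift_int (- 1) p) = (p :: 'a::comm_ring_1 poly)"
  by (simp add: pshift_def pshift_int_def pcompose_assoc[symmetric] pcompose_pCons)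

lemma rshift_Fract: "rshift (Fract p q) = Fract (pshift p) (pshift (q :: 'a::field_gcd poly))"
proof (cases "q = 0")
  case True
  then show ?thesis by (simp add: fract_collapse rshift_def)
next
  case False
  obtain p' q' where pq: "quot_of_fract (Fract p q) = (p', q')" by (cases "quot_of_fract (Fract p q)")
  have "q' \<noteq> 0" using snd_quot_of_fract_nonzero[of "Fract p q"] pq by simp
  moreover have "Fract p' q' = Fract p q" using Fract_quot_of_fract[of "Fract p q"] pq by simp
  ultimately have "p' * q = p * q'" using False by (simp add: eq_fract)
  then have "pshift p' * pshift q = pshift p * pshift q'" by (metis pshift_mult)
  then show ?thesis using pq \<open>q' \<noteq> 0\<close> False by (simp add: rshift_def eq_fract)
qed

lemma rshift_0 [simp]: "rshift 0 = 0"
  by (simp add: rshift_def fract_collapse)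

lemma rshift_add: "rshift (f + g) = rshift f + rshift g"
  by (cases f; cases g) (simp add: rshift_Fract pshift_mult pshift_add)

lemma rshift_diff: "rshift (f - g) = rshift f - rshift g"
  by (cases f; cases g) (simp add: rshift_Fract pshift_mult pshift_diff)

lemma rshift_mult: "rshift (f * g) = rshift f * rshift g"
  by (cases f; cases g) (simp add: rshift_Fract pshift_mult)

lemma rshift_sum: "rshift (\<Sum>i\<in>A. f i) = (\<Sum>i\<in>A. rshift (f i))"
  by (induction A rule: infinite_finite_induct) (auto simp: rshift_add)

lemma rshift_inj: "rshift f = rshift g \<Longrightarrow> f = g"
proof -
  assume "rshift f = rshift g"
  then have "rshift (f - g) = 0" by (simp add: rshift_diff)
  moreover obtain p q where "f - g = Fract p q" "q \<noteq> 0" by (cases "f - g")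
  ultimately have "p = 0" by (simp add: rshift_Fract eq_fract fract_expand)
  then show "f = g" using \<open>f - g = Fract p q\<close> by (simp add: fract_collapse)
qed

lemma rshift_in_loc_ring_iff: "rshift f \<in> loc_ring z \<longleftrightarrow> f \<in> loc_ring (z + 1)"
proof
  assume "f \<in> loc_ring (z + 1)"
  then show "rshift f \<in> loc_ring z"
    by (elim loc_ringE) (auto simp: rshift_Fract poly_ac_pshift intro!: Fract_in_loc_ring)
next
  assume "rshift f \<in> loc_ring z"
  then obtain p q where pq: "rshift f = Fract p q" "poly_ac q z \<noteq> 0" by (elim loc_ringE)
  have "rshift (Fract (pshift_int (- 1) p) (pshift_int (- 1) q)) = Fract p q"
    by (simp add: rshift_Fract pshift_pshift_int_minus_1)
  then have "f = Fract (pshift_int (- 1) p) (pshift_int (- 1) q)" using pq rshift_inj by metis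
  then show "f \<in> loc_ring (z + 1)" using pq by (simp add: Fract_in_loc_ring poly_ac_pshift_int)
qed

section \<open>Evaluation at z + q in the Laurent series field\<close>

definition taylor_ac :: "'a::field poly \<Rightarrow> 'a alg_closure \<Rightarrow> 'a alg_closure poly" where
  "taylor_ac p z = pcompose (map_poly to_ac p) [:z, 1:]"

lemma peval_fls_eq_taylor_ac: "peval_fls p z = fps_to_fls (fps_of_poly (taylor_ac p z))"
proof (induction p)
  case 0
  then show ?case by (simp add: peval_fls_def taylor_ac_def)
next
  case (pCons a p)
  have "taylor_ac (pCons a p) z = [:to_ac a:] + [:z, 1:] * taylor_ac p z"
    by (simp add: taylor_ac_def map_poly_pCons pcompose_pCons)
  then have "fps_to_fls (fps_of_poly (taylor_ac (pCons a p) z))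
      = fls_const (to_ac a) + (fls_X + fls_const z) * fps_to_fls (fps_of_poly (taylor_ac p z))"
    by (simp only: fps_of_poly_add fps_of_poly_mult fps_of_poly_linear fps_of_poly_const
        fls_times_fps_to_fls fps_to_fls_plus fps_const_to_fls fps_X_to_fls)
  then show ?case using pCons.IH by (simp add: peval_fls_def map_poly_pCons add.commute)
qed

lemma taylor_ac_add: "taylor_ac (p + q) z = taylor_ac p z + taylor_ac q z"
  by (simp add: taylor_ac_def map_poly_to_ac_add pcompose_add)

lemma taylor_ac_diff: "taylor_ac (p - q) z = taylor_ac p z - taylor_ac q z"
  by (simp add: taylor_ac_def map_poly_to_ac_diff pcompose_diff)

lemma taylor_ac_mult: "taylor_ac (p * q) z = taylor_ac p z * taylor_ac q z"
  by (simp add: taylor_ac_def map_poly_to_ac_mult pcompose_mult)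

lemma taylor_ac_eq_0_iff: "taylor_ac p z = 0 \<longleftrightarrow> p = 0"
  using pcompose_eq_0[of "map_poly to_ac p" "[:z, 1:]"] by (auto simp: taylor_ac_def map_poly_eq_0_iff)

lemma coeff_0_taylor_ac: "coeff (taylor_ac p z) 0 = poly_ac p z"
  by (simp add: taylor_ac_def poly_0_coeff_0[symmetric] poly_pcompose)

lemma taylor_ac_pshift: "taylor_ac (pshift p) z = taylor_ac p (z + 1)"
  by (simp add: taylor_ac_def pshift_def map_poly_to_ac_pcompose pcompose_assoc[symmetric]
      map_poly_pCons pcompose_pCons add.commute)

lemma peval_fls_mult [simp]: "peval_fls (p * q) z = peval_fls p z * peval_fls q z"
  by (simp add: peval_fls_eq_taylor_ac taylor_ac_mult fps_of_poly_mult fls_times_fps_to_fls)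

lemma peval_fls_add [simp]: "peval_fls (p + q) z = peval_fls p z + peval_fls q z"
  by (simp add: peval_fls_eq_taylor_ac taylor_ac_add fps_of_poly_add)

lemma peval_fls_diff [simp]: "peval_fls (p - q) z = peval_fls p z - peval_fls q z"
  by (simp add: peval_fls_eq_taylor_ac taylor_ac_diff fps_of_poly_diff)

lemma peval_fls_eq_0_iff [simp]: "peval_fls p z = 0 \<longleftrightarrow> p = 0"
  by (simp add: peval_fls_eq_taylor_ac taylor_ac_eq_0_iff fps_of_poly_eq_iff[of _ 0, simplified])

lemma peval_fls_pshift: "peval_fls (pshift p) z = peval_fls p (z + 1)"
  by (simp add: peval_fls_eq_taylor_ac taylor_ac_pshift)

lemma fls_subdegree_peval_fls_nonneg: "fls_subdegree (peval_fls p z) \<ge> 0"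
  by (simp add: peval_fls_eq_taylor_ac fls_subdegree_fls_to_fps_gt0)

lemma fls_subdegree_peval_fls_eq_0: "poly_ac p z \<noteq> 0 \<Longrightarrow> fls_subdegree (peval_fls p z) = 0"
  by (simp add: peval_fls_eq_taylor_ac fls_subdegree_fls_to_fps coeff_0_taylor_ac)

lemma reval_fls_Fract: "q \<noteq> 0 \<Longrightarrow> reval_fls (Fract p q) z = peval_fls p z / peval_fls q z"
proof -
  assume "q \<noteq> 0"
  obtain p' q' where pq: "quot_of_fract (Fract p q) = (p', q')" by (cases "quot_of_fract (Fract p q)")
  have "q' \<noteq> 0" using snd_quot_of_fract_nonzero[of "Fract p q"] pq by simp
  moreover have "Fract p' q' = Fract p q" using Fract_quot_of_fract[of "Fract p q"] pq by simp
  ultimately have "p' * q = p * q'" using \<open>q \<noteq> 0\<close> by (simp add: eq_fract)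
  then have "peval_fls p' z * peval_fls q z = peval_fls p z * peval_fls q' z" by (metis peval_fls_mult)
  then show ?thesis using pq \<open>q' \<noteq> 0\<close> \<open>q \<noteq> 0\<close> by (simp add: reval_fls_def field_simps)
qed

lemma reval_fls_0 [simp]: "reval_fls 0 z = 0"
  by (simp add: reval_fls_def)

lemma reval_fls_add: "reval_fls (f + g) z = reval_fls f z + reval_fls g z"
  by (cases f; cases g) (simp add: reval_fls_Fract field_simps)

lemma reval_fls_diff: "reval_fls (f - g) z = reval_fls f z - reval_fls g z"
  by (cases f; cases g) (simp add: reval_fls_Fract field_simps)

lemma reval_fls_mult: "reval_fls (f * g) z = reval_fls f z * reval_fls g z"
  by (cases f; cases g) (simp add: reval_fls_Fract field_simps)

lemma reval_fls_sum: "reval_fls (\<Sum>i\<in>A. f i) z = (\<Sum>i\<in>A. reval_fls (f i) z)"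
  by (induction A rule: infinite_finite_induct) (auto simp: reval_fls_add)

lemma reval_fls_rshift: "reval_fls (rshift f) z = reval_fls f (z + 1)"
  by (cases f) (simp add: rshift_Fract reval_fls_Fract peval_fls_pshift)

lemma nu_q_mult: "nu_q (f * g) = nu_q f + nu_q (g :: 'a::field fls)"
  by (cases "f = 0"; cases "g = 0") (auto simp: nu_q_def)

lemma nu_q_add_ge_min: "min (nu_q f) (nu_q g) \<le> nu_q (f + (g :: 'a::field fls))"
proof (cases "f = 0 \<or> g = 0 \<or> f + g = 0")
  case True
  then show ?thesis by (auto simp: nu_q_def)
next
  case False
  then show ?thesis using fls_plus_subdegree[of f g] by (auto simp: nu_q_def min_def)
qed

lemma nu_q_uminus [simp]: "nu_q (- f) = nu_q (f :: 'a::field fls)"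
  by (simp add: nu_q_def)

lemma nu_q_sum_ge:
  "(\<And>i. i \<in> A \<Longrightarrow> m \<le> nu_q (f i)) \<Longrightarrow> m \<le> nu_q (\<Sum>i\<in>A. f i :: 'a::field fls)"
proof (induction A rule: infinite_finite_induct)
  case (insert i A)
  then have "m \<le> min (nu_q (f i)) (nu_q (sum f A))" by simp
  also have "\<dots> \<le> nu_q (f i + sum f A)" by (rule nu_q_add_ge_min)
  finally show ?case using insert by simp
qed (simp_all add: nu_q_def)

lemma nu_q_sum_gt:
  "m < \<infinity> \<Longrightarrow> (\<And>i. i \<in> A \<Longrightarrow> m < nu_q (f i)) \<Longrightarrow> m < nu_q (\<Sum>i\<in>A. f i :: 'a::field fls)"
proof (induction A rule: infinite_finite_induct)
  case (insert i A)
  then have "m < min (nu_q (f i)) (nu_q (sum f A))" by simp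
  also have "\<dots> \<le> nu_q (f i + sum f A)" by (rule nu_q_add_ge_min)
  finally show ?case using insert by simp
qed (simp_all add: nu_q_def)

lemma nu_q_peval_fls_nonneg: "0 \<le> nu_q (peval_fls p z)"
  by (cases "p = 0") (auto simp: nu_q_def fls_subdegree_peval_fls_nonneg)

lemma nu_q_peval_fls_eq_0: "poly_ac p z \<noteq> 0 \<Longrightarrow> nu_q (peval_fls p z) = 0"
  by (auto simp: nu_q_def fls_subdegree_peval_fls_eq_0)

lemma nu_q_reval_fls_nonneg: "f \<in> loc_ring z \<Longrightarrow> 0 \<le> nu_q (reval_fls f z)"
  by (elim loc_ringE) (auto simp: reval_fls_Fract nu_q_def fls_divide_subdegree
      fls_subdegree_peval_fls_eq_0 fls_subdegree_peval_fls_nonneg)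

lemma nu_q_mult_peval_fls_ge: "nu_q g \<le> nu_q (peval_fls p z * g)"
  using nu_q_peval_fls_nonneg[of p z] by (simp add: nu_q_mult add_increasing)

lemma nu_q_mult_reval_fls_ge: "f \<in> loc_ring z \<Longrightarrow> nu_q g \<le> nu_q (reval_fls f z * g)"
  using nu_q_reval_fls_nonneg[of f z] by (simp add: nu_q_mult add_increasing)

section \<open>Integrality\<close>

lemma act_at_lincomb:
  "act_at r (lincomb r a W) z b = (\<Sum>i<r. reval_fls (a i) z * act_at r (W i) z b)"
proof -
  have "act_at r (lincomb r a W) z b
      = (\<Sum>j<r. \<Sum>i<r. reval_fls (a i) z * reval_fls (W i j) z * b (int j))"
    by (simp add: act_at_def lincomb_def reval_fls_sum reval_fls_mult sum_distrib_right)
  also have "\<dots> = (\<Sum>i<r. \<Sum>j<r. reval_fls (a i) z * (reval_fls (W i j) z * b (int j)))"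
    by (subst sum.swap) (simp add: mult.assoc)
  finally show ?thesis by (simp add: act_at_def sum_distrib_left)
qed

lemma integral_at_lincomb:
  assumes "\<And>i. i < r \<Longrightarrow> integral_at ell r z (W i)" "\<And>i. i < r \<Longrightarrow> a i \<in> loc_ring z"
  shows "integral_at ell r z (lincomb r a W)"
  unfolding integral_at_def
proof
  fix b assume b: "b \<in> Sol ell r z"
  show "liminf (\<lambda>n. nu_q (b (- int n))) \<le> nu_q (act_at r (lincomb r a W) z b)"
    unfolding act_at_lincomb
  proof (rule nu_q_sum_ge)
    fix i assume "i \<in> {..<r}"
    then have "liminf (\<lambda>n. nu_q (b (- int n))) \<le> nu_q (act_at r (W i) z b)"
      using assms(1)[of i] b by (auto simp: integral_at_def)
    also have "\<dots> \<le> nu_q (reval_fls (a i) z * act_at r (W i) z b)"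
      using assms(2) \<open>i \<in> {..<r}\<close> by (intro nu_q_mult_reval_fls_ge) auto
    finally show "liminf (\<lambda>n. nu_q (b (- int n))) \<le> nu_q (reval_fls (a i) z * act_at r (W i) z b)" .
  qed
qed

lemma Sol_shift: "b \<in> Sol ell r (z + 1) \<Longrightarrow> (\<lambda>k. b (k - 1)) \<in> Sol ell r z"
proof (unfold Sol_def, intro CollectI allI)
  fix n :: int
  assume "b \<in> {b. \<forall>n. (\<Sum>i\<le>r. peval_fls (ell i) (z + 1 + of_int n) * b (n + int i)) = 0}"
  then have "(\<Sum>i\<le>r. peval_fls (ell i) (z + 1 + of_int (n - 1)) * b (n - 1 + int i)) = 0" by blast
  then show "(\<Sum>i\<le>r. peval_fls (ell i) (z + of_int n) * b (n + int i - 1)) = 0"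
    by (simp add: algebra_simps)
qed

text \<open>Because L.b = 0, the reduction modulo L built into shiftA is invisible to b.\<close>
lemma act_at_shiftA:
  fixes ell :: "nat \<Rightarrow> 'a::field_gcd poly"
  assumes r: "0 < r" and ell_r: "ell r \<noteq> 0" and b: "b \<in> Sol ell r z"
  shows "act_at r (shiftA ell r f) z b = act_at r f (z + 1) (\<lambda>k. b (k + 1))"
proof -
  obtain m where m: "r = Suc m" using r by (cases r) auto
  define R where "R i = reval_fls (f i) (z + 1)" for i
  define P where "P i = peval_fls (ell i) z" for i
  have "P r \<noteq> 0" using ell_r by (simp add: P_def)
  have "(\<Sum>i\<le>r. peval_fls (ell i) (z + of_int 0) * b (0 + int i)) = 0"
    using b unfolding Sol_def by blast
  then have "(\<Sum>i\<le>r. P i * b (int i)) = 0" by (simp add: P_def)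
  then have recurrence: "(\<Sum>j<r. P j * b (int j)) = - (P r * b (int r))"
    unfolding m atMost_Suc lessThan_Suc_atMost by (simp add: eq_neg_iff_add_eq_0 add.commute)
  have "act_at r (shiftA ell r f) z b
      = (\<Sum>j<r. ((if j = 0 then 0 else R (j - 1)) - R m * (P j / P r)) * b (int j))"
    unfolding act_at_def using ell_r m
    by (intro sum.cong) (simp_all add: shiftA_def reval_fls_diff reval_fls_mult reval_fls_rshift
        reval_fls_Fract R_def P_def)
  also have "\<dots> = (\<Sum>j<r. (if j = 0 then 0 else R (j - 1)) * b (int j))
      - (R m / P r) * (\<Sum>j<r. P j * b (int j))"
    by (simp add: algebra_simps sum_subtractf sum_distrib_left)
  also have "\<dots> = (\<Sum>j<r. (if j = 0 then 0 else R (j - 1)) * b (int j)) + R m * b (int r)"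
    using \<open>P r \<noteq> 0\<close> by (simp only: recurrence) (simp add: field_simps)
  also have "(\<Sum>j<r. (if j = 0 then 0 else R (j - 1)) * b (int j)) = (\<Sum>i<m. R i * b (1 + int i))"
    unfolding m by (subst sum.lessThan_Suc_shift) simp
  also have "(\<Sum>i<m. R i * b (1 + int i)) + R m * b (int r) = (\<Sum>i<r. R i * b (1 + int i))"
    by (simp add: m)
  also have "\<dots> = act_at r f (z + 1) (\<lambda>k. b (k + 1))"
    by (simp add: act_at_def R_def add.commute)
  finally show ?thesis .
qed

lemma integral_at_shiftA:
  fixes ell :: "nat \<Rightarrow> 'a::field_gcd poly"
  assumes "0 < r" "ell r \<noteq> 0" "integral_at ell r z (shiftA ell r f)"
  shows "integral_at ell r (z + 1) f"
  unfolding integral_at_def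
proof
  fix b assume "b \<in> Sol ell r (z + 1)"
  define b' where "b' k = b (k - 1)" for k
  have "b' \<in> Sol ell r z" unfolding b'_def using \<open>b \<in> Sol ell r (z + 1)\<close> by (rule Sol_shift)
  have "liminf (\<lambda>n. nu_q (b (- int n))) \<le> liminf (\<lambda>n. nu_q (b (- int (Suc n))))"
    using liminf_subseq_mono[of Suc "\<lambda>n. nu_q (b (- int n))"] by (simp add: strict_mono_Suc_iff o_def)
  also have "\<dots> = liminf (\<lambda>n. nu_q (b' (- int n)))"
    by (simp only: b'_def of_nat_Suc minus_add_distrib diff_conv_add_uminus add.commute)
  also have "\<dots> \<le> nu_q (act_at r (shiftA ell r f) z b')"
    using assms(3) \<open>b' \<in> Sol ell r z\<close> by (auto simp: integral_at_def)
  also have "\<dots> = nu_q (act_at r f (z + 1) b)"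
    using act_at_shiftA[OF assms(1,2) \<open>b' \<in> Sol ell r z\<close>] by (simp add: b'_def)
  finally show "liminf (\<lambda>n. nu_q (b (- int n))) \<le> nu_q (act_at r f (z + 1) b)" .
qed

lemma liminf_le_if_frequently_le:
  fixes Y :: "nat \<Rightarrow> 'b::complete_linorder"
  assumes "\<And>N. \<exists>n\<ge>N. Y n \<le> m"
  shows "liminf Y \<le> m"
  unfolding liminf_SUP_INF
proof (rule SUP_least)
  fix N
  obtain n where "n \<ge> N" "Y n \<le> m" using assms by blast
  then show "(INF n\<in>{N..}. Y n) \<le> m" by (intro INF_lower2[of n]) auto
qed

text \<open>Solving the recurrence L.b = 0 for its leading term, a window of r consecutive
  values containing a value of valuation at most m moves one step to the left.\<close>
lemma Sol_window_step_left:
  fixes ell :: "nat \<Rightarrow> 'a::field poly"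
  assumes b: "b \<in> Sol ell r z" and r: "0 < r" and ell_r: "poly_ac (ell r) (z + of_int (k - 1)) \<noteq> 0"
    and window: "\<exists>i<r. nu_q (b (k + int i)) \<le> m"
  shows "\<exists>i<r. nu_q (b (k - 1 + int i)) \<le> m"
proof (rule ccontr)
  assume "\<not> ?thesis"
  then have gt: "m < nu_q (b (k - 1 + int i))" if "i < r" for i using that by (auto simp: not_le)
  then have "m < \<infinity>" using r by (cases m) auto
  define P where "P i = peval_fls (ell i) (z + of_int (k - 1))" for i
  have "(\<Sum>i\<le>r. P i * b (k - 1 + int i)) = 0" using b unfolding Sol_def P_def by blast
  moreover have "{..r} = insert r {..<r}" by auto
  ultimately have leading: "P r * b (k - 1 + int r) = - (\<Sum>i<r. P i * b (k - 1 + int i))"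
    by (simp add: eq_neg_iff_add_eq_0)
  have "m < nu_q (\<Sum>i<r. P i * b (k - 1 + int i))"
  proof (rule nu_q_sum_gt[OF \<open>m < \<infinity>\<close>])
    fix i assume "i \<in> {..<r}"
    then show "m < nu_q (P i * b (k - 1 + int i))"
      using gt[of i] nu_q_mult_peval_fls_ge[of "b (k - 1 + int i)" "ell i"] unfolding P_def
      by (meson less_le_trans lessThan_iff)
  qed
  also have "\<dots> = nu_q (P r * b (k - 1 + int r))"
    unfolding leading by simp
  also have "\<dots> = nu_q (b (k - 1 + int r))"
    using ell_r by (simp add: nu_q_mult P_def nu_q_peval_fls_eq_0)
  finally have "m < nu_q (b (k - 1 + int r))" .
  have "m < nu_q (b (k + int i))" if "i < r" for i
  proof (cases "Suc i < r")
    case True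
    then show ?thesis using gt[of "Suc i"] by (simp add: algebra_simps)
  next
    case False
    then have "k + int i = k - 1 + int r" using that by simp
    then show ?thesis using \<open>m < nu_q (b (k - 1 + int r))\<close> by (simp only:)
  qed
  then show False using window by (meson not_less)
qed

lemma integral_at_of_loc_ring:
  fixes ell :: "nat \<Rightarrow> 'a::field_gcd poly"
  assumes r: "0 < r" and ell_r: "\<And>k::int. k < 0 \<Longrightarrow> poly_ac (ell r) (z + of_int k) \<noteq> 0"
    and f: "\<And>i. i < r \<Longrightarrow> f i \<in> loc_ring z"
  shows "integral_at ell r z f"
  unfolding integral_at_def
proof
  fix b assume b: "b \<in> Sol ell r z"
  define m where "m = Min ((\<lambda>i. nu_q (b (int i))) ` {..<r})"
  have m_le: "m \<le> nu_q (b (int i))" if "i < r" for i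
    using that by (auto simp: m_def)
  have "m \<in> (\<lambda>i. nu_q (b (int i))) ` {..<r}" using r unfolding m_def by (intro Min_in) auto
  then have "\<exists>i<r. nu_q (b (- int 0 + int i)) \<le> m" by auto
  then have window: "\<exists>i<r. nu_q (b (- int n + int i)) \<le> m" for n
  proof (induction n)
    case (Suc n)
    then show ?case
      using Sol_window_step_left[OF b r ell_r, of "- int n"] by (simp add: algebra_simps)
  qed
  have "liminf (\<lambda>n. nu_q (b (- int n))) \<le> m"
  proof (rule liminf_le_if_frequently_le)
    fix N
    obtain i where "i < r" "nu_q (b (- int (N + r) + int i)) \<le> m" using window by blast
    moreover have "- int (N + r) + int i = - int (N + r - i)" using \<open>i < r\<close> by simp
    moreover have "N \<le> N + r - i" using \<open>i < r\<close> by simp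
    ultimately show "\<exists>n\<ge>N. nu_q (b (- int n)) \<le> m" by metis
  qed
  also have "m \<le> nu_q (act_at r f z b)"
    unfolding act_at_def using m_le f by (intro nu_q_sum_ge order.trans[OF _ nu_q_mult_reval_fls_ge]) auto
  finally show "liminf (\<lambda>n. nu_q (b (- int n))) \<le> nu_q (act_at r f z b)" .
qed

definition regular_at :: "nat \<Rightarrow> 'a::field_gcd alg_closure \<Rightarrow> (nat \<Rightarrow> 'a poly fract) \<Rightarrow> bool" where
  "regular_at r z f \<longleftrightarrow> (\<forall>i<r. f i \<in> loc_ring z)"

definition in_local_module ::
    "nat \<Rightarrow> (nat \<Rightarrow> nat \<Rightarrow> 'a::field_gcd poly fract) \<Rightarrow> 'a alg_closure \<Rightarrow> (nat \<Rightarrow> 'a poly fract) \<Rightarrow> bool" where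
  "in_local_module r W z f \<longleftrightarrow> (\<exists>a. (\<forall>i<r. a i \<in> loc_ring z) \<and> f = lincomb r a W)"

lemma lincomb_add: "lincomb r (\<lambda>i. a i + a' i) W = (\<lambda>j. lincomb r a W j + lincomb r a' W j)"
  by (simp add: lincomb_def fun_eq_iff algebra_simps sum.distrib)

lemma lincomb_diff: "lincomb r (\<lambda>i. a i - a' i) W = (\<lambda>j. lincomb r a W j - lincomb r a' W j)"
  by (simp add: lincomb_def fun_eq_iff algebra_simps sum_subtractf)

lemma lincomb_eq_imp_coeff_eq:
  assumes "is_basis_A r W" "lincomb r a W = lincomb r a' W" "i < r"
  shows "a i = a' i"
proof -
  have "lincomb r (\<lambda>i. a i - a' i) W = (\<lambda>_. 0)" using assms(2) by (simp add: lincomb_diff)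
  then show ?thesis using assms(1,3) by (auto simp: is_basis_A_def)
qed

lemma in_local_module_add:
  "in_local_module r W z f \<Longrightarrow> in_local_module r W z g \<Longrightarrow> in_local_module r W z (\<lambda>j. f j + g j)"
proof -
  assume "in_local_module r W z f" "in_local_module r W z g"
  then obtain a a' where "\<forall>i<r. a i \<in> loc_ring z" "f = lincomb r a W"
    "\<forall>i<r. a' i \<in> loc_ring z" "g = lincomb r a' W"
    by (auto simp: in_local_module_def)
  then show ?thesis unfolding in_local_module_def
    by (intro exI[of _ "\<lambda>i. a i + a' i"]) (simp add: lincomb_add loc_ring_add)
qed

lemma in_local_module_diff:
  "in_local_module r W z f \<Longrightarrow> in_local_module r W z g \<Longrightarrow> in_local_module r W z (\<lambda>j. f j - g j)"
proof -
  assume "in_local_module r W z f" "in_local_module r W z g"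
  then obtain a a' where "\<forall>i<r. a i \<in> loc_ring z" "f = lincomb r a W"
    "\<forall>i<r. a' i \<in> loc_ring z" "g = lincomb r a' W"
    by (auto simp: in_local_module_def)
  then show ?thesis unfolding in_local_module_def
    by (intro exI[of _ "\<lambda>i. a i - a' i"]) (simp add: lincomb_diff loc_ring_diff)
qed

lemma in_local_module_lincomb_iff:
  assumes "is_basis_A r W"
  shows "in_local_module r W z (lincomb r a W) \<longleftrightarrow> (\<forall>i<r. a i \<in> loc_ring z)"
proof
  assume "in_local_module r W z (lincomb r a W)"
  then obtain a' where "\<forall>i<r. a' i \<in> loc_ring z" "lincomb r a W = lincomb r a' W"
    by (auto simp: in_local_module_def)
  then show "\<forall>i<r. a i \<in> loc_ring z" using lincomb_eq_imp_coeff_eq[OF assms] by metis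
qed (auto simp: in_local_module_def)

lemma shiftA_in_Avec: "shiftA ell r f \<in> Avec r"
  by (simp add: Avec_def shiftA_def)

lemma shiftA_lincomb:
  "shiftA ell r (lincomb r a W) = (\<lambda>j. \<Sum>i<r. rshift (a i) * shiftA ell r (W i) j)"
  by (rule ext, case_tac "j = 0") (simp_all add: shiftA_def lincomb_def rshift_sum rshift_mult
      sum_distrib_right sum_subtractf sum_negf mult.assoc right_diff_distrib)

lemma shiftA_lincomb_matrix:
  assumes "\<forall>i<r. shiftA ell r (W i) = lincomb r (\<lambda>j. Fract (M i j) e) W"
  shows "shiftA ell r (lincomb r a W) = lincomb r (\<lambda>k. \<Sum>i<r. rshift (a i) * Fract (M i k) e) W"
proof -
  have "shiftA ell r (lincomb r a W)
      = (\<lambda>j. \<Sum>i<r. rshift (a i) * (\<Sum>k<r. Fract (M i k) e * W k j))"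
    unfolding shiftA_lincomb using assms by (intro ext sum.cong) (auto simp: lincomb_def)
  also have "\<dots> = lincomb r (\<lambda>k. \<Sum>i<r. rshift (a i) * Fract (M i k) e) W"
    unfolding lincomb_def sum_distrib_left sum_distrib_right mult.assoc by (rule ext) (rule sum.swap)
  finally show ?thesis .
qed

lemma regular_at_shiftA:
  fixes ell :: "nat \<Rightarrow> 'a::field_gcd poly"
  assumes "0 < r" "poly_ac (ell r) z \<noteq> 0" "regular_at r (z + 1) f"
  shows "regular_at r z (shiftA ell r f)"
proof -
  have shifted: "rshift (f i) \<in> loc_ring z" if "i < r" for i
    using assms(3) that by (simp add: regular_at_def rshift_in_loc_ring_iff)
  have "shiftA ell r f j \<in> loc_ring z" if "j < r" for j
    using that assms(1,2) shifted
    by (auto simp: shiftA_def intro!: loc_ring_diff loc_ring_uminus loc_ring_mult_Fract)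
  then show ?thesis by (simp add: regular_at_def)
qed

text \<open>Coordinate 0 of S f is - ell_0/ell_r times the shifted last coordinate of f, so the
  shifted coordinates of f are recovered from those of S f after dividing by ell_0.\<close>
lemma regular_at_of_shiftA:
  fixes ell :: "nat \<Rightarrow> 'a::field_gcd poly"
  assumes r: "0 < r" and ell_0: "poly_ac (ell 0) z \<noteq> 0" and ell_r: "ell r \<noteq> 0"
    and F: "regular_at r z (shiftA ell r f)"
  shows "regular_at r (z + 1) f"
proof -
  define F where "F = shiftA ell r f"
  have "ell 0 \<noteq> 0" using ell_0 by auto
  have F_loc: "F j \<in> loc_ring z" if "j < r" for j using F that by (simp add: regular_at_def F_def)
  have last: "rshift (f (r - 1)) = - (F 0 * Fract (ell r) (ell 0))"
  proof -
    have "F 0 * Fract (ell r) (ell 0) = - (rshift (f (r - 1)) * (Fract (ell 0) (ell r) * Fract (ell r) (ell 0)))"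
      using r by (simp add: F_def shiftA_def mult.assoc)
    moreover have "Fract (ell 0) (ell r) * Fract (ell r) (ell 0) = 1"
      using \<open>ell 0 \<noteq> 0\<close> ell_r by (simp add: eq_fract One_fract_def)
    ultimately show ?thesis by simp
  qed
  have other: "rshift (f (j - 1)) = F j - F 0 * Fract (ell j) (ell 0)" if "0 < j" "j < r" for j
  proof -
    have "rshift (f (r - 1)) * Fract (ell j) (ell r) = - (F 0 * (Fract (ell r) (ell 0) * Fract (ell j) (ell r)))"
      by (subst last) (simp del: mult_fract add: mult.assoc)
    also have "Fract (ell r) (ell 0) * Fract (ell j) (ell r) = Fract (ell j) (ell 0)"
      using \<open>ell 0 \<noteq> 0\<close> ell_r by (simp add: eq_fract)
    finally have "rshift (f (r - 1)) * Fract (ell j) (ell r) = - (F 0 * Fract (ell j) (ell 0))" .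
    moreover have "F j = rshift (f (j - 1)) - rshift (f (r - 1)) * Fract (ell j) (ell r)"
      using that by (simp add: F_def shiftA_def)
    ultimately show ?thesis by simp
  qed
  have "rshift (f i) \<in> loc_ring z" if "i < r" for i
  proof (cases "Suc i < r")
    case True
    then have "rshift (f i) = F (Suc i) - F 0 * Fract (ell (Suc i)) (ell 0)" using other[of "Suc i"] by simp
    then show ?thesis using F_loc True r ell_0 by (auto intro!: loc_ring_diff loc_ring_mult_Fract)
  next
    case False
    then have "i = r - 1" using that by simp
    then show ?thesis using last F_loc[of 0] r ell_0 by (auto intro!: loc_ring_uminus loc_ring_mult_Fract)
  qed
  then show ?thesis by (simp add: regular_at_def rshift_in_loc_ring_iff)
qed

lemma orb_le_iff_int: "orb_le a b \<longleftrightarrow> (\<exists>n::int. 0 \<le> n \<and> b = a + of_int n)"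
  unfolding orb_le_def
proof
  assume "\<exists>n::nat. b = a + of_nat n"
  then show "\<exists>n::int. 0 \<le> n \<and> b = a + of_int n" by (metis of_int_of_nat_eq of_nat_0_le_iff)
next
  assume "\<exists>n::int. 0 \<le> n \<and> b = a + of_int n"
  then show "\<exists>n::nat. b = a + of_nat n" by (metis of_int_of_nat_eq nonneg_int_cases)
qed

lemma orb_lt_iff_int: "orb_lt a b \<longleftrightarrow> (\<exists>n::int. 0 < n \<and> b = a + of_int n)"
  unfolding orb_lt_def
proof
  assume "\<exists>n::nat. 0 < n \<and> b = a + of_nat n"
  then show "\<exists>n::int. 0 < n \<and> b = a + of_int n" by (metis of_int_of_nat_eq of_nat_0_less_iff)
next
  assume "\<exists>n::int. 0 < n \<and> b = a + of_int n"
  then show "\<exists>n::nat. 0 < n \<and> b = a + of_nat n" by (metis of_int_of_nat_eq pos_int_cases of_nat_0_less_iff)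
qed

lemma self_eq_add_of_int_add_of_int_iff:
  "(z :: 'b::ring_char_0) = z + of_int k + of_int n \<longleftrightarrow> k + n = 0"
  by (simp add: add.assoc flip: of_int_add)

lemma finite_set_orbit_ends:
  fixes P :: "'b::ring_char_0 \<Rightarrow> bool"
  assumes "finite {z. P z}" "P z0"
  obtains \<alpha> n where "\<not> P \<alpha>" "P (\<alpha> + 1)" "P (\<alpha> + of_nat (Suc n))" "\<not> P (\<alpha> + of_nat (Suc n) + 1)"
proof -
  define N where "N = {k::int. P (z0 + of_int k)}"
  have "N = (\<lambda>k. z0 + of_int k) -` {z. P z}" by (auto simp: N_def)
  moreover have "inj (\<lambda>k::int. z0 + (of_int k :: 'b))" by (auto simp: inj_on_def)
  ultimately have "finite N" using finite_vimageI[OF assms(1)] by metis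
  moreover have "0 \<in> N" using assms(2) by (simp add: N_def)
  ultimately have "Min N \<in> N" "Max N \<in> N" "Min N - 1 \<notin> N" "Max N + 1 \<notin> N"
    using Min_le[of N "Min N - 1"] Max_ge[of N "Max N + 1"] by (auto intro: Min_in Max_in)
  moreover have "Min N \<le> Max N" using \<open>finite N\<close> \<open>Max N \<in> N\<close> by simp
  moreover define \<alpha> where "\<alpha> = z0 + of_int (Min N - 1)"
  moreover define n where "n = nat (Max N - Min N)"
  moreover have "\<alpha> + 1 = z0 + of_int (Min N)" "\<alpha> + of_nat (Suc n) = z0 + of_int (Max N)"
    using \<open>Min N \<le> Max N\<close> by (simp_all add: \<alpha>_def n_def)
  ultimately show ?thesis using that[of \<alpha> n] by (simp add: N_def add.assoc)
qed

section \<open>Antidifferences with respect to a suitable basis\<close>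

locale suitable_setting =
  fixes ell :: "nat \<Rightarrow> 'a::{field_char_0, field_gcd} poly" and r :: nat
    and B :: "'a alg_closure set" and W :: "nat \<Rightarrow> nat \<Rightarrow> 'a poly fract" and u :: "'a poly"
  assumes ell_0_nonzero: "ell 0 \<noteq> 0" and ell_r_nonzero: "ell r \<noteq> 0"
    and suitable: "suitable_basis ell r B W"
    and shift_free: "shift_free (map_poly to_ac u * (\<Prod>\<beta>\<in>B. [:- \<beta>, 1:]))"
begin

abbreviation Z where "Z \<equiv> Zset ell r B"

abbreviation u_B where "u_B \<equiv> map_poly to_ac u * (\<Prod>\<beta>\<in>B. [:- \<beta>, 1:])"

lemma W_is_basis: "is_basis_A r W"
  using suitable by (simp add: suitable_basis_def)

lemma beta_unique_in_orbit: "\<rho> \<in> roots_l0lr ell r \<Longrightarrow> \<exists>!\<beta>. \<beta> \<in> B \<and> same_orbit \<rho> \<beta>"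
  using suitable by (simp add: suitable_basis_def admissible_betas_def)

lemma root_orb_le_beta: "\<beta> \<in> B \<Longrightarrow> \<rho> \<in> roots_l0lr ell r \<Longrightarrow> same_orbit \<rho> \<beta> \<Longrightarrow> orb_le \<rho> \<beta>"
  using suitable by (simp add: suitable_basis_def admissible_betas_def)

lemma finite_B: "finite B"
proof -
  have "\<forall>\<beta>\<in>B. \<exists>\<rho>\<in>roots_l0lr ell r. same_orbit \<rho> \<beta>"
    using suitable by (simp add: suitable_basis_def admissible_betas_def)
  then obtain \<rho> where \<rho>: "\<And>\<beta>. \<beta> \<in> B \<Longrightarrow> \<rho> \<beta> \<in> roots_l0lr ell r \<and> same_orbit (\<rho> \<beta>) \<beta>" by metis
  then have "inj_on \<rho> B" using beta_unique_in_orbit by (metis inj_onI)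
  moreover have "finite (roots_l0lr ell r)"
    unfolding roots_l0lr_def using ell_0_nonzero ell_r_nonzero
    by (intro poly_roots_finite) (simp add: map_poly_eq_0_iff)
  ultimately show ?thesis using \<rho> by (metis finite_imageD finite_subset image_subsetI)
qed

lemma poly_u_B_beta: "\<beta> \<in> B \<Longrightarrow> poly u_B \<beta> = 0"
  using finite_B by (simp add: poly_prod prod_zero_iff)

lemma u_B_root_unique_in_orbit:
  assumes "poly u_B z = 0" "poly u_B (z + of_int k) = 0"
  shows "k = 0"
proof (rule ccontr)
  assume "k \<noteq> 0"
  then have coprime: "gcd u_B (pshift_int k u_B) = 1" using shift_free by (simp add: shift_free_def)
  have "[:- z, 1:] dvd pshift_int k u_B"
    using assms(2) by (simp add: poly_eq_0_iff_dvd[symmetric] pshift_int_def poly_pcompose add.commute)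
  moreover have "[:- z, 1:] dvd u_B" using assms(1) poly_eq_0_iff_dvd by blast
  ultimately have "[:- z, 1:] dvd 1" using coprime by (metis gcd_greatest)
  then show False by (simp add: is_unit_poly_iff)
qed

lemma u_nonzero: "u \<noteq> 0"
proof
  assume "u = 0"
  then have "u_B = 0" by simp
  moreover have "gcd u_B (pshift_int 1 u_B) = 1" using shift_free by (simp add: shift_free_def)
  ultimately show False by (simp only:) (simp add: pshift_int_def)
qed

lemma orbit_cases:
  obtains (rootless) "\<forall>\<rho>\<in>roots_l0lr ell r. \<not> same_orbit \<rho> \<gamma>"
    | (beta) \<beta> k where "\<beta> \<in> B" "\<gamma> = \<beta> + of_int k"
proof (cases "\<exists>\<rho>\<in>roots_l0lr ell r. same_orbit \<rho> \<gamma>")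
  case True
  then obtain \<rho> \<beta> where "same_orbit \<rho> \<gamma>" "\<beta> \<in> B" "same_orbit \<rho> \<beta>"
    using beta_unique_in_orbit by blast
  then obtain s t where "\<gamma> = \<rho> + of_int s" "\<beta> = \<rho> + of_int t" by (auto simp: same_orbit_def)
  then have "\<gamma> = \<beta> + of_int (s - t)" by simp
  then show ?thesis using beta \<open>\<beta> \<in> B\<close> by blast
qed (use rootless in blast)

lemma rootless_orbit:
  assumes "\<forall>\<rho>\<in>roots_l0lr ell r. \<not> same_orbit \<rho> \<gamma>"
  shows "\<gamma> + of_int k \<notin> Z" "poly_ac (ell 0 * ell r) (\<gamma> + of_int k) \<noteq> 0"
proof
  assume "\<gamma> + of_int k \<in> Z"
  then obtain \<rho> m where "\<rho> \<in> roots_l0lr ell r" "\<gamma> + of_int k = \<rho> + of_int m"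
    by (auto simp: Zset_def orb_lt_iff_int)
  moreover from this(2) have "same_orbit \<rho> \<gamma>"
    unfolding same_orbit_def by (intro exI[of _ "m - k"]) (simp add: algebra_simps)
  ultimately show False using assms by blast
next
  have "same_orbit (\<gamma> + of_int k) \<gamma>" unfolding same_orbit_def by (intro exI[of _ "- k"]) simp
  then show "poly_ac (ell 0 * ell r) (\<gamma> + of_int k) \<noteq> 0"
    using assms by (auto simp: roots_l0lr_def simp del: poly_ac_mult)
qed

lemma no_root_right_of_beta:
  assumes "\<beta> \<in> B" "1 \<le> k"
  shows "poly_ac (ell 0 * ell r) (\<beta> + of_int k) \<noteq> 0"
proof
  assume "poly_ac (ell 0 * ell r) (\<beta> + of_int k) = 0"
  then have "\<beta> + of_int k \<in> roots_l0lr ell r" by (simp add: roots_l0lr_def del: poly_ac_mult)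
  moreover have "same_orbit (\<beta> + of_int k) \<beta>" unfolding same_orbit_def by (intro exI[of _ "- k"]) simp
  ultimately have "orb_le (\<beta> + of_int k) \<beta>" using root_orb_le_beta[OF assms(1)] by blast
  then obtain n :: int where "0 \<le> n" "\<beta> = \<beta> + of_int k + of_int n" by (auto simp: orb_le_iff_int)
  then show False using assms(2) by (simp add: self_eq_add_of_int_add_of_int_iff)
qed

lemma not_in_Z_right_of_beta:
  assumes "\<beta> \<in> B" "1 \<le> k"
  shows "\<beta> + of_int k \<notin> Z"
proof
  assume "\<beta> + of_int k \<in> Z"
  then obtain \<beta>' \<rho> n m where "\<beta>' \<in> B" "\<rho> \<in> roots_l0lr ell r" "0 \<le> n" "\<beta>' = \<beta> + of_int k + of_int n"
    "\<beta> + of_int k = \<rho> + of_int m"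
    by (auto simp: Zset_def orb_le_iff_int orb_lt_iff_int)
  moreover from this(5) have "same_orbit \<rho> \<beta>"
    unfolding same_orbit_def by (intro exI[of _ "m - k"]) (simp add: algebra_simps)
  moreover from calculation(4,5) have "same_orbit \<rho> \<beta>'"
    unfolding same_orbit_def by (intro exI[of _ "m + n"]) (simp add: algebra_simps)
  ultimately have "\<beta>' = \<beta>" using beta_unique_in_orbit assms(1) by blast
  then have "k + n = 0"
    using \<open>\<beta>' = \<beta> + of_int k + of_int n\<close> self_eq_add_of_int_add_of_int_iff by metis
  then show False using assms(2) \<open>0 \<le> n\<close> by simp
qed

lemma no_root_left_of_gap:
  assumes "\<beta> \<in> B" "k \<le> 0" "\<beta> + of_int k \<notin> Z" "j < 0"
  shows "poly_ac (ell 0 * ell r) (\<beta> + of_int k + of_int j) \<noteq> 0"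
proof
  assume "poly_ac (ell 0 * ell r) (\<beta> + of_int k + of_int j) = 0"
  then have "\<beta> + of_int k + of_int j \<in> roots_l0lr ell r" by (simp add: roots_l0lr_def del: poly_ac_mult)
  moreover have "orb_lt (\<beta> + of_int k + of_int j) (\<beta> + of_int k)"
    unfolding orb_lt_iff_int using assms(4) by (intro exI[of _ "- j"]) simp
  moreover have "orb_le (\<beta> + of_int k) \<beta>"
    unfolding orb_le_iff_int using assms(2) by (intro exI[of _ "- k"]) simp
  ultimately have "\<beta> + of_int k \<in> Z" using assms(1) unfolding Zset_def by blast
  with assms(3) show False by simp
qed

lemma in_Z_step_right:
  assumes "\<beta> \<in> B" "k \<le> 0" "z \<in> Z" "z + 1 = \<beta> + of_int k"
  shows "z + 1 \<in> Z"
proof -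
  obtain \<rho> m where "\<rho> \<in> roots_l0lr ell r" "0 < m" "z = \<rho> + of_int m"
    using assms(3) by (auto simp: Zset_def orb_lt_iff_int)
  moreover from this have "orb_lt \<rho> (z + 1)" unfolding orb_lt_iff_int by (intro exI[of _ "m + 1"]) simp
  moreover have "orb_le (z + 1) \<beta>" unfolding orb_le_iff_int using assms(2,4) by (intro exI[of _ "- k"]) simp
  ultimately show ?thesis using assms(1) unfolding Zset_def by blast
qed

text \<open>At a point alpha not in B, one of the two transfer principles (the elementary one
  outside Z, or the one for integrality) links alpha with alpha + 1.\<close>
lemma left_end_conditions:
  assumes "\<alpha> \<notin> B"
  shows "(\<alpha> \<notin> Z \<and> \<alpha> + 1 \<notin> Z \<and> poly_ac (ell 0) \<alpha> \<noteq> 0)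
    \<or> (\<alpha> + 1 \<in> Z \<and> (\<alpha> \<in> Z \<or> (\<forall>j::int. j < 0 \<longrightarrow> poly_ac (ell r) (\<alpha> + of_int j) \<noteq> 0)))"
proof (cases \<alpha> rule: orbit_cases)
  case rootless
  then show ?thesis using rootless_orbit[OF rootless, of 0] rootless_orbit[OF rootless, of 1] by simp
next
  case (beta \<beta> k)
  have \<alpha>1: "\<alpha> + 1 = \<beta> + of_int (k + 1)" using beta(2) by simp
  have "k \<noteq> 0" using assms beta by auto
  then consider "1 \<le> k" | "k \<le> -1" by linarith
  then show ?thesis
  proof cases
    case 1
    then show ?thesis
      using not_in_Z_right_of_beta[OF beta(1), of k] not_in_Z_right_of_beta[OF beta(1), of "k + 1"]
        no_root_right_of_beta[OF beta(1) 1] beta(2) by (simp add: add.assoc)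
  next
    case 2
    show ?thesis
    proof (cases "\<alpha> + 1 \<in> Z")
      case True
      have "poly_ac (ell r) (\<alpha> + of_int j) \<noteq> 0" if "\<alpha> \<notin> Z" "j < 0" for j
        using no_root_left_of_gap[OF beta(1), of k j] 2 that beta(2) by simp
      then show ?thesis using True by blast
    next
      case False
      then have "\<alpha> \<notin> Z" using in_Z_step_right[OF beta(1) _ _ \<alpha>1] 2 by auto
      moreover have "poly_ac (ell 0 * ell r) (\<beta> + of_int (k + 1) + of_int (- 1)) \<noteq> 0"
        using 2 False \<alpha>1 by (intro no_root_left_of_gap[OF beta(1)]) auto
      moreover have "\<beta> + of_int (k + 1) + of_int (- 1) = \<alpha>" using beta(2) by simp
      ultimately show ?thesis using False by simp
    qed
  qed
qed

lemma right_end_conditions: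
  assumes "\<not> (\<exists>\<beta>\<in>B. orb_le \<delta> \<beta>)"
  shows "\<delta> \<notin> Z \<and> \<delta> + 1 \<notin> Z \<and> poly_ac (ell r) \<delta> \<noteq> 0"
proof (cases \<delta> rule: orbit_cases)
  case rootless
  then show ?thesis using rootless_orbit[OF rootless, of 0] rootless_orbit[OF rootless, of 1] by simp
next
  case (beta \<beta> k)
  have "1 \<le> k"
  proof (rule ccontr)
    assume "\<not> 1 \<le> k"
    then have "orb_le \<delta> \<beta>" unfolding orb_le_iff_int using beta(2) by (intro exI[of _ "- k"]) simp
    then show False using assms beta(1) by blast
  qed
  moreover have "\<delta> + 1 = \<beta> + of_int (k + 1)" using beta(2) by simp
  ultimately show ?thesis
    using not_in_Z_right_of_beta[OF beta(1), of k] not_in_Z_right_of_beta[OF beta(1), of "k + 1"]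
      no_root_right_of_beta[OF beta(1), of k] beta(2) by (simp add: add.assoc)
qed

lemma local_imp_integral_in_Z: "z \<in> Z \<Longrightarrow> in_local_module r W z f \<Longrightarrow> integral_at ell r z f"
  using suitable unfolding in_local_module_def suitable_basis_def local_integral_basis_def
  by (auto intro!: integral_at_lincomb)

lemma integral_imp_local_in_Z:
  "z \<in> Z \<Longrightarrow> f \<in> Avec r \<Longrightarrow> integral_at ell r z f \<Longrightarrow> in_local_module r W z f"
  using suitable unfolding in_local_module_def suitable_basis_def local_integral_basis_def by blast

lemma local_iff_regular_outside_Z:
  "z \<notin> Z \<Longrightarrow> in_local_module r W z f \<longleftrightarrow> f \<in> Avec r \<and> regular_at r z f"
  using suitable unfolding in_local_module_def suitable_basis_def same_local_module_def regular_at_def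
  by (auto simp: set_eq_iff) (metis (mono_tags, lifting))+

context
  fixes c :: "nat \<Rightarrow> 'a poly" and g :: "nat \<Rightarrow> 'a poly fract"
  assumes r_pos: "0 < r" and g_Avec: "g \<in> Avec r"
    and antidifference: "lincomb r (\<lambda>i. Fract (c i) u) W = deltaA ell r g"
begin

lemma poly_u_zero_if_shiftA_local:
  assumes "\<not> in_local_module r W z g" "in_local_module r W z (shiftA ell r g)"
  shows "poly_ac u z = 0"
proof (rule ccontr)
  assume "poly_ac u z \<noteq> 0"
  then have "in_local_module r W z (lincomb r (\<lambda>i. Fract (c i) u) W)"
    unfolding in_local_module_def by (auto intro: Fract_in_loc_ring)
  then have "in_local_module r W z (\<lambda>j. shiftA ell r g j - lincomb r (\<lambda>i. Fract (c i) u) W j)"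
    using assms(2) by (rule in_local_module_diff[rotated])
  also have "(\<lambda>j. shiftA ell r g j - lincomb r (\<lambda>i. Fract (c i) u) W j) = g"
    using antidifference by (simp add: deltaA_def fun_eq_iff)
  finally show False using assms(1) by contradiction
qed

lemma poly_u_zero_if_shiftA_nonlocal:
  assumes "in_local_module r W z g" "\<not> in_local_module r W z (shiftA ell r g)"
  shows "poly_ac u z = 0"
proof (rule ccontr)
  assume "poly_ac u z \<noteq> 0"
  then have "in_local_module r W z (lincomb r (\<lambda>i. Fract (c i) u) W)"
    unfolding in_local_module_def by (auto intro: Fract_in_loc_ring)
  then have "in_local_module r W z (\<lambda>j. lincomb r (\<lambda>i. Fract (c i) u) W j + g j)"
    using assms(1) by (rule in_local_module_add)
  also have "(\<lambda>j. lincomb r (\<lambda>i. Fract (c i) u) W j + g j) = shiftA ell r g"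
    using antidifference by (simp add: deltaA_def fun_eq_iff)
  finally show False using assms(2) by contradiction
qed

lemma poly_u_zero_at_left_end:
  assumes "\<alpha> \<notin> B" "in_local_module r W \<alpha> g" "\<not> in_local_module r W (\<alpha> + 1) g"
  shows "poly_ac u \<alpha> = 0"
proof (rule poly_u_zero_if_shiftA_nonlocal[OF assms(2)])
  show "\<not> in_local_module r W \<alpha> (shiftA ell r g)"
  proof
    assume local: "in_local_module r W \<alpha> (shiftA ell r g)"
    consider "\<alpha> \<notin> Z" "\<alpha> + 1 \<notin> Z" "poly_ac (ell 0) \<alpha> \<noteq> 0"
      | "\<alpha> + 1 \<in> Z" "\<alpha> \<in> Z \<or> (\<forall>j::int. j < 0 \<longrightarrow> poly_ac (ell r) (\<alpha> + of_int j) \<noteq> 0)"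
      using left_end_conditions[OF assms(1)] by blast
    then have "in_local_module r W (\<alpha> + 1) g"
    proof cases
      case 1
      then have "regular_at r \<alpha> (shiftA ell r g)" using local local_iff_regular_outside_Z by blast
      then have "regular_at r (\<alpha> + 1) g"
        using regular_at_of_shiftA r_pos \<open>poly_ac (ell 0) \<alpha> \<noteq> 0\<close> ell_r_nonzero by blast
      then show ?thesis using \<open>\<alpha> + 1 \<notin> Z\<close> g_Avec local_iff_regular_outside_Z by blast
    next
      case 2
      have "integral_at ell r \<alpha> (shiftA ell r g)"
      proof (cases "\<alpha> \<in> Z")
        case True
        then show ?thesis using local local_imp_integral_in_Z by blast
      next
        case False
        then have "regular_at r \<alpha> (shiftA ell r g)" using local local_iff_regular_outside_Z by blast
        then show ?thesis using 2 False r_pos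
          by (intro integral_at_of_loc_ring) (auto simp: regular_at_def)
      qed
      then have "integral_at ell r (\<alpha> + 1) g" by (rule integral_at_shiftA[of r ell, OF r_pos ell_r_nonzero])
      then show ?thesis using \<open>\<alpha> + 1 \<in> Z\<close> g_Avec integral_imp_local_in_Z by blast
    qed
    with assms(3) show False by contradiction
  qed
qed

lemma poly_u_zero_at_right_end:
  assumes "\<not> (\<exists>\<beta>\<in>B. orb_le \<delta> \<beta>)" "\<not> in_local_module r W \<delta> g" "in_local_module r W (\<delta> + 1) g"
  shows "poly_ac u \<delta> = 0"
proof (rule poly_u_zero_if_shiftA_local[OF assms(2)])
  have "\<delta> \<notin> Z" "\<delta> + 1 \<notin> Z" "poly_ac (ell r) \<delta> \<noteq> 0" using right_end_conditions[OF assms(1)] by auto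
  have "regular_at r (\<delta> + 1) g" using assms(3) \<open>\<delta> + 1 \<notin> Z\<close> local_iff_regular_outside_Z by blast
  then have "regular_at r \<delta> (shiftA ell r g)"
    using regular_at_shiftA r_pos \<open>poly_ac (ell r) \<delta> \<noteq> 0\<close> by blast
  then show "in_local_module r W \<delta> (shiftA ell r g)"
    using \<open>\<delta> \<notin> Z\<close> shiftA_in_Avec local_iff_regular_outside_Z by blast
qed

lemma finite_nonlocal: "finite {z. \<not> in_local_module r W z g}"
proof -
  obtain a where g: "g = lincomb r a W" using W_is_basis g_Avec by (auto simp: is_basis_A_def)
  have "{z. \<not> in_local_module r W z g} \<subseteq> (\<Union>i<r. {z. poly_ac (snd (quot_of_fract (a i))) z = 0})"
    using in_local_module_lincomb_iff[OF W_is_basis] g by (auto simp: loc_ring_iff_denominator)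
  moreover have "finite (\<Union>i<r. {z. poly_ac (snd (quot_of_fract (a i))) z = 0})"
    by (intro finite_UN_I) (auto intro!: poly_roots_finite simp: map_poly_eq_0_iff)
  ultimately show ?thesis by (rule finite_subset)
qed

lemma local_everywhere: "in_local_module r W z g"
proof (rule ccontr)
  assume "\<not> in_local_module r W z g"
  then obtain \<alpha> n where ends: "in_local_module r W \<alpha> g" "\<not> in_local_module r W (\<alpha> + 1) g"
    "\<not> in_local_module r W (\<alpha> + of_nat (Suc n)) g" "in_local_module r W (\<alpha> + of_nat (Suc n) + 1) g"
    using finite_set_orbit_ends[of "\<lambda>z. \<not> in_local_module r W z g", OF finite_nonlocal] by blast
  define \<delta> where "\<delta> = \<alpha> + of_nat (Suc n)"
  have "poly u_B \<alpha> = 0"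
  proof (cases "\<alpha> \<in> B")
    case True
    then show ?thesis by (rule poly_u_B_beta)
  next
    case False
    then show ?thesis using poly_u_zero_at_left_end ends by simp
  qed
  show False
  proof (cases "\<exists>\<beta>\<in>B. orb_le \<delta> \<beta>")
    case True
    then obtain \<beta> m where "\<beta> \<in> B" "0 \<le> m" "\<beta> = \<alpha> + of_int (int (Suc n) + m)"
      by (auto simp: orb_le_iff_int \<delta>_def add.assoc)
    then have "int (Suc n) + m = 0"
      using u_B_root_unique_in_orbit[OF \<open>poly u_B \<alpha> = 0\<close>] poly_u_B_beta by metis
    then show False using \<open>0 \<le> m\<close> by simp
  next
    case False
    then have "poly u_B (\<alpha> + of_int (int (Suc n))) = 0"
      using poly_u_zero_at_right_end ends by (simp add: \<delta>_def)
    then show False using u_B_root_unique_in_orbit[OF \<open>poly u_B \<alpha> = 0\<close>] by fastforce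
  qed
qed

lemma antidifference_polynomial_coords: "\<exists>b. g = lincomb r (\<lambda>i. Fract (b i) 1) W"
proof -
  obtain a where g: "g = lincomb r a W" using W_is_basis g_Avec by (auto simp: is_basis_A_def)
  have "a i \<in> loc_ring z" if "i < r" for i z
    using local_everywhere[of z] in_local_module_lincomb_iff[OF W_is_basis] g that by simp
  then have "\<exists>p. a i = Fract p 1" if "i < r" for i using that in_all_loc_rings_imp_polynomial by blast
  then obtain b where "\<forall>i<r. a i = Fract (b i) 1" by metis
  then have "g = lincomb r (\<lambda>i. Fract (b i) 1) W" unfolding g lincomb_def by (intro ext sum.cong) auto
  then show ?thesis by blast
qed

end

lemma summable_imp_polynomial_antidifference:
  assumes "summable_A ell r (lincomb r (\<lambda>i. Fract (c i) u) W)"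
  shows "\<exists>b. lincomb r (\<lambda>i. Fract (c i) u) W = deltaA ell r (lincomb r (\<lambda>i. Fract (b i) 1) W)"
proof (cases "r = 0")
  case True
  then show ?thesis by (simp add: lincomb_def deltaA_def shiftA_def)
next
  case False
  obtain g where "g \<in> Avec r" "lincomb r (\<lambda>i. Fract (c i) u) W = deltaA ell r g"
    using assms by (auto simp: summable_A_def)
  then show ?thesis using antidifference_polynomial_coords[of g c] False by auto
qed

end

section \<open>The denominator of a summable element\<close>

lemma sum_Fract_same_denominator:
  "(d :: 'a::idom) \<noteq> 0 \<Longrightarrow> (\<Sum>i\<in>A. Fract (p i) d) = Fract (\<Sum>i\<in>A. p i) d"
proof (induction A rule: infinite_finite_induct)
  case (insert x F)
  then have "(\<Sum>i\<in>insert x F. Fract (p i) d) = Fract ((p x + (\<Sum>i\<in>F. p i)) * d) (d * d)"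
    by (simp add: algebra_simps)
  also have "\<dots> = Fract (p x + (\<Sum>i\<in>F. p i)) d"
    using insert.prems by (metis mult.commute mult_fract_cancel)
  finally show ?case using insert by simp
qed (simp_all add: fract_collapse)

lemma denominator_dvd_of_polynomial_antidifference:
  fixes u e :: "'a::field_gcd poly"
  assumes W: "is_basis_A r W"
    and M: "\<forall>i<r. shiftA ell r (W i) = lincomb r (\<lambda>j. Fract (M i j) e) W"
    and coprime: "Gcd (insert u (c ` {..<r})) = 1" and "u \<noteq> 0"
    and h: "lincomb r (\<lambda>i. Fract (c i) u) W = deltaA ell r (lincomb r (\<lambda>i. Fract (b i) 1) W)"
  shows "u dvd e"
proof (cases "e = 0")
  case False
  define N where "N k = (\<Sum>i<r. pshift (b i) * M i k) - b k * e" for k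
  have "deltaA ell r (lincomb r (\<lambda>i. Fract (b i) 1) W)
      = lincomb r (\<lambda>k. (\<Sum>i<r. rshift (Fract (b i) 1) * Fract (M i k) e) - Fract (b k) 1) W"
    unfolding deltaA_def shiftA_lincomb_matrix[OF M] lincomb_diff ..
  also have "\<dots> = lincomb r (\<lambda>k. Fract (N k) e) W"
    using False by (simp add: rshift_Fract sum_Fract_same_denominator N_def)
  finally have coords: "Fract (c k) u = Fract (N k) e" if "k < r" for k
    using lincomb_eq_imp_coeff_eq[OF W] h that by metis
  have "u dvd e * x" if x: "x \<in> insert u (c ` {..<r})" for x
  proof (cases "x = u")
    case False
    then obtain k where "k < r" "x = c k" using x by auto
    then have "c k * e = N k * u" using coords[of k] \<open>u \<noteq> 0\<close> \<open>e \<noteq> 0\<close> by (simp add: eq_fract)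
    then show ?thesis using \<open>x = c k\<close> by (simp add: mult.commute)
  qed simp
  then have "u dvd Gcd ((*) e ` insert u (c ` {..<r}))" by (intro Gcd_greatest) auto
  also have "\<dots> = normalize (e * Gcd (insert u (c ` {..<r})))" by (rule Gcd_mult)
  finally show ?thesis using coprime by simp
qed simp

theorem mainTheorem9:
  fixes ell :: "nat \<Rightarrow> 'a::{field_char_0, field_gcd} poly" and r :: nat
    and B :: "'a alg_closure set" and W :: "nat \<Rightarrow> nat \<Rightarrow> 'a poly fract"
    and e :: "'a poly" and M :: "nat \<Rightarrow> nat \<Rightarrow> 'a poly"
    and c :: "nat \<Rightarrow> 'a poly" and u :: "'a poly"
  assumes "ell 0 \<noteq> 0" and "ell r \<noteq> 0"
    and "suitable_basis ell r B W"
    and "\<forall>i<r. shiftA ell r (W i) = lincomb r (\<lambda>j. Fract (M i j) e) W"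
    and "Gcd (insert u (c ` {..<r})) = 1"
    and "shift_free (map_poly to_ac u * (\<Prod>\<beta>\<in>B. [:- \<beta>, 1:]))"
    and "summable_A ell r (lincomb r (\<lambda>i. Fract (c i) u) W)"
  shows "u dvd e \<and>
    (\<exists>b :: nat \<Rightarrow> 'a poly. lincomb r (\<lambda>i. Fract (c i) u) W
        = deltaA ell r (lincomb r (\<lambda>i. Fract (b i) 1) W))"
proof -
  interpret suitable_setting ell r B W u
    using assms(1-3,6) by unfold_locales
  obtain b where b: "lincomb r (\<lambda>i. Fract (c i) u) W = deltaA ell r (lincomb r (\<lambda>i. Fract (b i) 1) W)"
    using summable_imp_polynomial_antidifference[OF assms(7)] by blast
  have "u dvd e"
    using W_is_basis assms(4,5) u_nonzero b by (rule denominator_dvd_of_polynomial_antidifference)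
  then show ?thesis using b by blast
qed

end
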